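(* Let $\mathcal{F}(\mathsf{REG},\mathsf{REG})$ be the class of all languages $L(\Phi)$ generated by F-systems $\Phi=(L_1,L_2)$ in which both the core language $L_1$ and the folding procedure language $L_2$ are regular. Then every language in $\mathcal{F}(\mathsf{REG},\mathsf{REG})$ is a linear (context-free) language, i.e., $\mathcal{F}(\mathsf{REG},\mathsf{REG})\subseteq \mathsf{LIN}$.
   Context: Let $\Sigma$ be a finite alphabet and $\Gamma=\{\mathtt{u},\mathtt{d}\}$. Define $f:\Sigma^*\times\Sigma\times\Gamma\to\Sigma^*$ by $f(x,a,\mathtt{u})=ax$ and $f(x,a,\mathtt{d})=xa$. The folding function $h:\Sigma^*\times\Gamma^*\to\Sigma^*$ is the partial function with $h(\varepsilon,\varepsilon)=\varepsilon$; if $|w|=|v|>0$ with $w=w'a$ ($a\in\Sigma$) and $v=v'b$ ($b\in\Gamma$), then $h(w,v)=f(h(w',v'),a,b)$; and $h(w,v)$ is undefined if $|w|\neq|v|$. An F-system is a pair $\Phi=(L_1,L_2)$ with $L_1\subseteq\Sigma^*$ and $L_2\subseteq\Gamma^*$; its language is $L(\Phi)=\{h(w,v)\mid w\in L_1, v\in L_2, |w|=|v|\}$. A linear grammar is a context-free grammar all of whose rules have the form $A\to uBv$ or $A\to u$ with $u,v$ terminal words and $A,B$ nonterminals; $\mathsf{LIN}$ is the class of languages generated by linear grammars, and $\mathsf{REG}$ the class of regular languages. *)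

theory Defs
  imports Main
begin

datatype gamma = U | D

fun fstep :: "'a list \<Rightarrow> 'a \<Rightarrow> gamma \<Rightarrow> 'a list" where
  "fstep x a U = a # x"
| "fstep x a D = x @ [a]"

fun hfold :: "'a list \<Rightarrow> gamma list \<Rightarrow> 'a list option" where
  "hfold w v = (if length w = length v
                then Some (foldl (\<lambda>x (a, b). fstep x a b) [] (zip w v))
                else None)"

definition F_lang :: "'a list set \<Rightarrow> gamma list set \<Rightarrow> 'a list set" where
  "F_lang L1 L2 = {the (hfold w v) | w v. w \<in> L1 \<and> v \<in> L2 \<and> length w = length v}"

definition regular :: "'a list set \<Rightarrow> bool" where
  "regular L \<longleftrightarrow> (\<exists>(Q :: nat set) (\<delta> :: nat \<Rightarrow> 'a \<Rightarrow> nat) q0 F.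
      finite Q \<and> q0 \<in> Q \<and> F \<subseteq> Q \<and> (\<forall>q\<in>Q. \<forall>a. \<delta> q a \<in> Q) \<and>
      L = {w. foldl \<delta> q0 w \<in> F})"

text \<open>Linear grammar rules over nonterminals nat:
  A -> u (TermRule A u) and A -> u B v (LinRule A u B v).\<close>
datatype 'a lrule = TermRule nat "'a list" | LinRule nat "'a list" nat "'a list"

inductive lin_derives :: "'a lrule set \<Rightarrow> nat \<Rightarrow> 'a list \<Rightarrow> bool" for R where
  trm: "TermRule A u \<in> R \<Longrightarrow> lin_derives R A u"
| lnr: "LinRule A u B v \<in> R \<Longrightarrow> lin_derives R B w \<Longrightarrow> lin_derives R A (u @ w @ v)"

definition linear_lang :: "'a list set \<Rightarrow> bool" where
  "linear_lang L \<longleftrightarrow> (\<exists>(R :: 'a lrule set) S. finite R \<and> L = {w. lin_derives R S w})"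

end

theory Submission
  imports Defs "HOL-Library.Nat_Bijection"
begin

text \<open>Run deterministic automata for \<open>L1\<close> and \<open>L2\<close> in parallel, reading the core word and
  the folding procedure from left to right. By the recursion \<open>h(w'a, v'b) = f(h(w',v'), a, b)\<close>
  the last letter \<open>a\<close> lands at the left end of the folded word if \<open>b = u\<close> and at the right end
  if \<open>b = d\<close>. So a nonterminal for the state pair \<open>(p, q)\<close>, generating the foldings of all
  equal-length pairs \<open>(w, v)\<close> that lead the automata to \<open>p\<close> and \<open>q\<close>, has the linear rules
  \<open>(\<delta>1 p a, \<delta>2 q u) \<rightarrow> a (p, q)\<close> and \<open>(\<delta>1 p a, \<delta>2 q d) \<rightarrow> (p, q) a\<close>; the start symbol
  rewrites to the accepting pairs.\<close>

definition fold_word :: "'a list \<Rightarrow> gamma list \<Rightarrow> 'a list" where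
  "fold_word w v = foldl (\<lambda>x (a, b). fstep x a b) [] (zip w v)"

lemma fold_word_Nil [simp]: "fold_word [] [] = []"
  by (simp add: fold_word_def)

lemma fold_word_snoc [simp]:
  "length w = length v \<Longrightarrow> fold_word (w @ [a]) (v @ [b]) = fstep (fold_word w v) a b"
  by (simp add: fold_word_def)

lemma F_lang_eq_fold_word:
  "F_lang L1 L2 = {fold_word w v | w v. w \<in> L1 \<and> v \<in> L2 \<and> length w = length v}"
  by (auto simp: F_lang_def fold_word_def)

lemma foldl_in_closed:
  assumes "q \<in> Q" and "\<forall>p\<in>Q. \<forall>a. \<delta> p a \<in> Q"
  shows "foldl \<delta> q w \<in> Q"
  using assms by (induction w arbitrary: q) auto

text \<open>Nonterminal \<open>0\<close> is the start symbol; the others encode pairs of states.\<close>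

definition pair_nt :: "nat \<Rightarrow> nat \<Rightarrow> nat" where
  "pair_nt p q = Suc (prod_encode (p, q))"

lemma pair_nt_eq_iff [simp]: "pair_nt p q = pair_nt p' q' \<longleftrightarrow> p = p' \<and> q = q'"
  by (simp add: pair_nt_def prod_encode_eq)

lemma pair_nt_neq_0 [simp]: "pair_nt p q \<noteq> 0" "0 \<noteq> pair_nt p q"
  by (simp_all add: pair_nt_def)

locale dfa_pair =
  fixes Q1 :: "nat set" and \<delta>1 :: "nat \<Rightarrow> 'a::finite \<Rightarrow> nat" and s1 :: nat and F1 :: "nat set"
    and Q2 :: "nat set" and \<delta>2 :: "nat \<Rightarrow> gamma \<Rightarrow> nat" and s2 :: nat and F2 :: "nat set"
  assumes finite_Q1: "finite Q1" and start1: "s1 \<in> Q1" and final1: "F1 \<subseteq> Q1"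
    and closed1: "\<forall>p\<in>Q1. \<forall>a. \<delta>1 p a \<in> Q1"
    and finite_Q2: "finite Q2" and start2: "s2 \<in> Q2" and final2: "F2 \<subseteq> Q2"
    and closed2: "\<forall>q\<in>Q2. \<forall>b. \<delta>2 q b \<in> Q2"
begin

definition fold_grammar :: "'a lrule set" where
  "fold_grammar =
     {TermRule (pair_nt s1 s2) []}
     \<union> (\<lambda>(p, q). LinRule 0 [] (pair_nt p q) []) ` (F1 \<times> F2)
     \<union> (\<lambda>(p, q, a). LinRule (pair_nt (\<delta>1 p a) (\<delta>2 q U)) [a] (pair_nt p q) []) ` (Q1 \<times> Q2 \<times> UNIV)
     \<union> (\<lambda>(p, q, a). LinRule (pair_nt (\<delta>1 p a) (\<delta>2 q D)) [] (pair_nt p q) [a]) ` (Q1 \<times> Q2 \<times> UNIV)"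

lemma finite_fold_grammar: "finite fold_grammar"
  using finite_Q1 finite_Q2 final1 final2
  by (auto simp: fold_grammar_def intro!: finite_imageI dest: finite_subset)

lemma derives_pair_nt_of_run:
  assumes "length w = length v"
  shows "lin_derives fold_grammar (pair_nt (foldl \<delta>1 s1 w) (foldl \<delta>2 s2 v)) (fold_word w v)"
  using assms
proof (induction w arbitrary: v rule: rev_induct)
  case Nil
  then show ?case by (auto simp: fold_grammar_def intro: lin_derives.trm)
next
  case (snoc a w v')
  then obtain v b where v': "v' = v @ [b]" and len: "length w = length v"
    by (cases v' rule: rev_cases) auto
  let ?p = "foldl \<delta>1 s1 w" and ?q = "foldl \<delta>2 s2 v"
  have IH: "lin_derives fold_grammar (pair_nt ?p ?q) (fold_word w v)"
    using snoc.IH len by blast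
  have states: "?p \<in> Q1" "?q \<in> Q2"
    by (rule foldl_in_closed[OF start1 closed1] foldl_in_closed[OF start2 closed2])+
  show ?case
  proof (cases b)
    case U
    have "LinRule (pair_nt (\<delta>1 ?p a) (\<delta>2 ?q U)) [a] (pair_nt ?p ?q) [] \<in> fold_grammar"
      using states by (simp add: fold_grammar_def image_iff Bex_def)
    from lin_derives.lnr[OF this IH] show ?thesis using U v' len by simp
  next
    case D
    have "LinRule (pair_nt (\<delta>1 ?p a) (\<delta>2 ?q D)) [] (pair_nt ?p ?q) [a] \<in> fold_grammar"
      using states by (simp add: fold_grammar_def image_iff Bex_def)
    from lin_derives.lnr[OF this IH] show ?thesis using D v' len by simp
  qed
qed

lemma run_of_derives_pair_nt:
  assumes "lin_derives fold_grammar X s" and "X = pair_nt p q"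
  shows "\<exists>w v. length w = length v \<and> foldl \<delta>1 s1 w = p \<and> foldl \<delta>2 s2 v = q
           \<and> s = fold_word w v"
  using assms
proof (induction arbitrary: p q rule: lin_derives.induct)
  case (trm A u)
  then have "p = s1" "q = s2" "u = []"
    by (auto simp: fold_grammar_def)
  then show ?case
    by (intro exI[of _ "[]"]) simp
next
  case (lnr A l B r x)
  from lnr.hyps(1) consider
      (Start) "A = 0"
    | (Up) p' q' a where "A = pair_nt (\<delta>1 p' a) (\<delta>2 q' U)" "l = [a]" "B = pair_nt p' q'" "r = []"
    | (Down) p' q' a where "A = pair_nt (\<delta>1 p' a) (\<delta>2 q' D)" "l = []" "B = pair_nt p' q'" "r = [a]"
    unfolding fold_grammar_def by auto
  then show ?case
  proof cases
    case Start
    with lnr.prems show ?thesis by simp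
  next
    case Up
    with lnr.IH obtain w' v' where "length w' = length v'" "foldl \<delta>1 s1 w' = p'"
        "foldl \<delta>2 s2 v' = q'" "x = fold_word w' v'" by blast
    with Up lnr.prems show ?thesis
      by (intro exI[of _ "w' @ [a]"] exI[of _ "v' @ [U]"]) simp
  next
    case Down
    with lnr.IH obtain w' v' where "length w' = length v'" "foldl \<delta>1 s1 w' = p'"
        "foldl \<delta>2 s2 v' = q'" "x = fold_word w' v'" by blast
    with Down lnr.prems show ?thesis
      by (intro exI[of _ "w' @ [a]"] exI[of _ "v' @ [D]"]) simp
  qed
qed

lemma derives_start_iff:
  "lin_derives fold_grammar 0 s \<longleftrightarrow>
     (\<exists>p\<in>F1. \<exists>q\<in>F2. lin_derives fold_grammar (pair_nt p q) s)"
proof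
  assume "lin_derives fold_grammar 0 s"
  then show "\<exists>p\<in>F1. \<exists>q\<in>F2. lin_derives fold_grammar (pair_nt p q) s"
  proof cases
    case (lnr l B r x)
    then have "l = [] \<and> r = [] \<and> (\<exists>p\<in>F1. \<exists>q\<in>F2. B = pair_nt p q)"
      by (auto simp: fold_grammar_def)
    with lnr show ?thesis by auto
  qed (auto simp: fold_grammar_def)
next
  assume "\<exists>p\<in>F1. \<exists>q\<in>F2. lin_derives fold_grammar (pair_nt p q) s"
  then obtain p q where "p \<in> F1" "q \<in> F2" and derives: "lin_derives fold_grammar (pair_nt p q) s"
    by blast
  then have "LinRule 0 [] (pair_nt p q) [] \<in> fold_grammar"
    by (simp add: fold_grammar_def image_iff Bex_def)
  from lin_derives.lnr[OF this derives] show "lin_derives fold_grammar 0 s" by simp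
qed

lemma fold_grammar_language:
  "{s. lin_derives fold_grammar 0 s} = F_lang {w. foldl \<delta>1 s1 w \<in> F1} {v. foldl \<delta>2 s2 v \<in> F2}"
proof (intro set_eqI iffI)
  fix s
  assume "s \<in> {s. lin_derives fold_grammar 0 s}"
  then obtain p q where "p \<in> F1" "q \<in> F2" "lin_derives fold_grammar (pair_nt p q) s"
    using derives_start_iff by auto
  then show "s \<in> F_lang {w. foldl \<delta>1 s1 w \<in> F1} {v. foldl \<delta>2 s2 v \<in> F2}"
    unfolding F_lang_eq_fold_word by (fastforce dest: run_of_derives_pair_nt)
next
  fix s
  assume "s \<in> F_lang {w. foldl \<delta>1 s1 w \<in> F1} {v. foldl \<delta>2 s2 v \<in> F2}"
  then obtain w v where "foldl \<delta>1 s1 w \<in> F1" "foldl \<delta>2 s2 v \<in> F2" "length w = length v"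
      "s = fold_word w v"
    unfolding F_lang_eq_fold_word by blast
  then show "s \<in> {s. lin_derives fold_grammar 0 s}"
    using derives_start_iff derives_pair_nt_of_run by blast
qed

end

theorem theorem1:
  fixes L1 :: "('a::finite) list set" and L2 :: "gamma list set"
  assumes "regular L1" and "regular L2"
  shows "linear_lang (F_lang L1 L2)"
proof -
  obtain Q1 and \<delta>1 :: "nat \<Rightarrow> 'a \<Rightarrow> nat" and s1 F1 where
    dfa1: "finite Q1" "s1 \<in> Q1" "F1 \<subseteq> Q1" "\<forall>p\<in>Q1. \<forall>a. \<delta>1 p a \<in> Q1"
    and L1: "L1 = {w. foldl \<delta>1 s1 w \<in> F1}"
    using assms(1) unfolding regular_def by blast
  obtain Q2 and \<delta>2 :: "nat \<Rightarrow> gamma \<Rightarrow> nat" and s2 F2 where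
    dfa2: "finite Q2" "s2 \<in> Q2" "F2 \<subseteq> Q2" "\<forall>q\<in>Q2. \<forall>b. \<delta>2 q b \<in> Q2"
    and L2: "L2 = {v. foldl \<delta>2 s2 v \<in> F2}"
    using assms(2) unfolding regular_def by blast
  interpret dfa_pair Q1 \<delta>1 s1 F1 Q2 \<delta>2 s2 F2
    using dfa1 dfa2 by unfold_locales
  show ?thesis
    unfolding linear_lang_def L1 L2 fold_grammar_language[symmetric]
    using finite_fold_grammar by blast
qed

end
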